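(* Let $(R,\mathfrak{m})$ be a commutative Artinian local ring with identity and $\mathfrak{m}\neq0$. If $f\in R[x]$ is a regular polynomial of degree $n$, then $L(f)\subseteq\{1,2,\dots,n\}$.
   Context: A polynomial is regular if not all of its coefficients lie in $\mathfrak{m}$. A nonunit polynomial is irreducible if in any factorization into two polynomials one factor is a unit of $R[x]$ (a polynomial $a_0+\dots+a_dx^d$ is a unit iff $a_0$ is a unit and $a_i\in\mathfrak{m}$ for $i>0$). A positive integer $k$ is a length of $f$ if $f$ is a product of $k$ irreducible polynomials of $R[x]$; $L(f)$ denotes the set of lengths of $f$. *)

theory Defs
  imports "HOL-Computational_Algebra.Polynomial" "HOL-Computational_Algebra.Factorial_Ring"
begin

definition is_ideal :: "'a::comm_ring_1 set \<Rightarrow> bool" where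
  "is_ideal I \<longleftrightarrow> 0 \<in> I \<and> (\<forall>x\<in>I. \<forall>y\<in>I. x + y \<in> I) \<and> (\<forall>x\<in>I. \<forall>r. r * x \<in> I)"

definition maximal_ideal :: "'a::comm_ring_1 set \<Rightarrow> bool" where
  "maximal_ideal M \<longleftrightarrow> is_ideal M \<and> M \<noteq> UNIV \<and>
     (\<forall>J. is_ideal J \<and> M \<subseteq> J \<longrightarrow> J = M \<or> J = UNIV)"

definition local_ring_with :: "'a::comm_ring_1 set \<Rightarrow> bool" where
  "local_ring_with M \<longleftrightarrow> maximal_ideal M \<and> (\<forall>J. maximal_ideal J \<longrightarrow> J = M)"

definition artinian :: "'a::comm_ring_1 itself \<Rightarrow> bool" where
  "artinian _ \<longleftrightarrow> (\<forall>I :: nat \<Rightarrow> 'a set. (\<forall>n. is_ideal (I n)) \<and> (\<forall>n. I (Suc n) \<subseteq> I n)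
      \<longrightarrow> (\<exists>N. \<forall>n\<ge>N. I n = I N))"

definition regular_poly :: "'a::comm_ring_1 set \<Rightarrow> 'a poly \<Rightarrow> bool" where
  "regular_poly M f \<longleftrightarrow> (\<exists>i. coeff f i \<notin> M)"

definition lengths :: "'a::comm_ring_1 poly \<Rightarrow> nat set" where
  "lengths f = {k. k > 0 \<and> (\<exists>fs. length fs = k \<and> (\<forall>g\<in>set fs. irreducible g) \<and> prod_list fs = f)}"

end

theory Submission
  imports Defs
begin

text \<open>
  In an Artinian local ring every element of the maximal ideal \<open>M\<close> is nilpotent, so a polynomial
  whose constant term is a unit and whose other coefficients lie in \<open>M\<close> is a unit of \<open>R[x]\<close>.
  Hence an irreducible regular polynomial has positive residual degree, i.e.\ the degree of its image
  in \<open>(R/M)[x]\<close>. Since \<open>M\<close> is prime, the residual degree of a product of regular polynomials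
  is at least the sum of the residual degrees of the factors, and all factors of a regular
  polynomial are regular. So a product of \<open>k\<close> irreducibles has residual degree at least \<open>k\<close>,
  and the residual degree never exceeds the degree.
\<close>

lemma ideal_eq_UNIV_if_one: "is_ideal I \<Longrightarrow> 1 \<in> I \<Longrightarrow> I = UNIV"
  unfolding is_ideal_def by (metis UNIV_eq_I mult.right_neutral)

lemma ideal_mult_right: "is_ideal I \<Longrightarrow> a \<in> I \<Longrightarrow> a * r \<in> I"
  unfolding is_ideal_def by (metis mult.commute)

lemma ideal_diff: "is_ideal I \<Longrightarrow> a \<in> I \<Longrightarrow> b \<in> I \<Longrightarrow> a - b \<in> I"
  unfolding is_ideal_def by (metis diff_conv_add_uminus mult_minus1)

lemma ideal_sum: "is_ideal I \<Longrightarrow> (\<And>i. i \<in> S \<Longrightarrow> f i \<in> I) \<Longrightarrow> sum f S \<in> I"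
  by (induction S rule: infinite_finite_induct) (simp_all add: is_ideal_def)

lemma is_ideal_multiples: "is_ideal {x * r | r. True}"
  unfolding is_ideal_def
proof (intro conjI ballI allI)
  show "0 \<in> {x * r | r. True}" by (metis (mono_tags) mem_Collect_eq mult_zero_right)
  fix a b assume "a \<in> {x * r | r. True}" "b \<in> {x * r | r. True}"
  then show "a + b \<in> {x * r | r. True}" by (auto simp: distrib_left[symmetric])
next
  fix a s assume "a \<in> {x * r | r. True}"
  then obtain r where "a = x * r" by blast
  then have "s * a = x * (s * r)" by (simp add: mult.left_commute)
  then show "s * a \<in> {x * r | r. True}" by blast
qed

lemma is_ideal_Union_chain:
  assumes "C \<noteq> {}" "chain\<^sub>\<subseteq> C" "\<And>I. I \<in> C \<Longrightarrow> is_ideal I"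
  shows "is_ideal (\<Union>C)"
  unfolding is_ideal_def
proof (intro conjI ballI allI)
  show "0 \<in> \<Union>C" using assms(1,3) unfolding is_ideal_def by blast
  fix a r assume "a \<in> \<Union>C"
  then show "r * a \<in> \<Union>C" using assms(3) unfolding is_ideal_def by blast
next
  fix a b assume "a \<in> \<Union>C" "b \<in> \<Union>C"
  then obtain I J where "I \<in> C" "a \<in> I" "J \<in> C" "b \<in> J" by blast
  moreover have "I \<subseteq> J \<or> J \<subseteq> I" using \<open>I \<in> C\<close> \<open>J \<in> C\<close> assms(2) unfolding chain_subset_def by blast
  ultimately show "a + b \<in> \<Union>C" using assms(3) unfolding is_ideal_def by blast
qed

lemma proper_ideal_subset_maximal_ideal:
  assumes "is_ideal I" "1 \<notin> I"
  obtains J where "maximal_ideal J" "I \<subseteq> J"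
proof -
  define A where "A = {J. is_ideal J \<and> I \<subseteq> J \<and> 1 \<notin> J}"
  have "\<exists>U\<in>A. \<forall>X\<in>C. X \<subseteq> U" if "C \<in> chains A" for C
  proof (cases "C = {}")
    case True
    have "I \<in> A" using assms unfolding A_def by blast
    with True show ?thesis by blast
  next
    case False
    from that have C: "C \<subseteq> A" "chain\<^sub>\<subseteq> C" unfolding chains_def by auto
    then have "is_ideal (\<Union>C)"
      using False is_ideal_Union_chain[of C] unfolding A_def by blast
    moreover have "I \<subseteq> \<Union>C" "1 \<notin> \<Union>C" using False C(1) unfolding A_def by blast+
    ultimately have "\<Union>C \<in> A" unfolding A_def by blast
    then show ?thesis by blast
  qed
  then obtain J where "J \<in> A" and J_max: "\<forall>X\<in>A. J \<subseteq> X \<longrightarrow> X = J"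
    using Zorn_Lemma2[of A] by blast
  have "maximal_ideal J"
    unfolding maximal_ideal_def
  proof (intro conjI allI impI)
    show "is_ideal J" "J \<noteq> UNIV" using \<open>J \<in> A\<close> unfolding A_def by auto
    fix K assume K: "is_ideal K \<and> J \<subseteq> K"
    show "K = J \<or> K = UNIV"
    proof (cases "1 \<in> K")
      case True then show ?thesis using K ideal_eq_UNIV_if_one by blast
    next
      case False then show ?thesis using K \<open>J \<in> A\<close> J_max unfolding A_def by blast
    qed
  qed
  moreover have "I \<subseteq> J" using \<open>J \<in> A\<close> unfolding A_def by blast
  ultimately show thesis by (rule that)
qed

lemma local_ring_is_ideal: "local_ring_with M \<Longrightarrow> is_ideal M"
  unfolding local_ring_with_def maximal_ideal_def by blast

lemma local_ring_one_notin: "local_ring_with M \<Longrightarrow> 1 \<notin> M"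
  unfolding local_ring_with_def maximal_ideal_def using ideal_eq_UNIV_if_one by blast

lemma local_ring_notin_iff_unit:
  assumes "local_ring_with M"
  shows "x \<notin> M \<longleftrightarrow> x dvd 1"
proof
  assume "x \<notin> M"
  show "x dvd 1"
  proof (rule ccontr)
    assume "\<not> x dvd 1"
    then have "1 \<notin> {x * r | r. True}" by (auto intro: dvdI)
    then obtain J where J: "maximal_ideal J" "{x * r | r. True} \<subseteq> J"
      using proper_ideal_subset_maximal_ideal[OF is_ideal_multiples] by blast
    have "x \<in> {x * r | r. True}" by (metis (mono_tags) mem_Collect_eq mult_1_right)
    moreover have "J = M" using J(1) assms unfolding local_ring_with_def by blast
    ultimately show False using J(2) \<open>x \<notin> M\<close> by blast
  qed
next
  assume "x dvd 1"
  then obtain r where r: "1 = x * r" by (rule dvdE)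
  show "x \<notin> M"
  proof
    assume "x \<in> M"
    then have "1 \<in> M" unfolding r by (rule ideal_mult_right[OF local_ring_is_ideal[OF assms]])
    then show False using local_ring_one_notin[OF assms] by blast
  qed
qed

lemma local_ring_mult_notin:
  assumes "local_ring_with M" "a \<notin> M" "b \<notin> M"
  shows "a * b \<notin> M"
proof -
  have "a * b dvd 1 * 1"
    using assms mult_dvd_mono local_ring_notin_iff_unit[OF assms(1)] by blast
  then show ?thesis using local_ring_notin_iff_unit[OF assms(1)] by simp
qed

definition nilpotent :: "'a::semiring_1 \<Rightarrow> bool" where
  "nilpotent x \<longleftrightarrow> (\<exists>n. x ^ n = 0)"

lemma power_eq_0_mono:
  fixes x :: "'a::semiring_1"
  assumes "x ^ m = 0" "m \<le> k"
  shows "x ^ k = 0"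
proof -
  obtain d where "k = m + d" using le_Suc_ex[OF assms(2)] by blast
  then show ?thesis using assms(1) by (simp add: power_add)
qed

lemma nilpotent_mult:
  fixes x y :: "'a::comm_semiring_1"
  shows "nilpotent x \<Longrightarrow> nilpotent (x * y)"
  unfolding nilpotent_def power_mult_distrib by (metis mult_zero_left)

lemma nilpotent_add:
  fixes x y :: "'a::comm_semiring_1"
  assumes "nilpotent x" "nilpotent y"
  shows "nilpotent (x + y)"
proof -
  obtain m n where m: "x ^ m = 0" and n: "y ^ n = 0" using assms unfolding nilpotent_def by blast
  have "(x + y) ^ (m + n) = (\<Sum>k\<le>m+n. of_nat ((m+n) choose k) * x ^ k * y ^ (m + n - k))"
    by (rule binomial_ring)
  also have "\<dots> = 0"
  proof (intro sum.neutral ballI)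
    fix k
    have "x ^ k = 0 \<or> y ^ (m + n - k) = 0"
    proof (cases "m \<le> k")
      case True then show ?thesis using power_eq_0_mono[OF m] by blast
    next
      case False then show ?thesis using power_eq_0_mono[OF n, of "m + n - k"] by simp
    qed
    then show "of_nat ((m+n) choose k) * x ^ k * y ^ (m + n - k) = 0" by auto
  qed
  finally show ?thesis unfolding nilpotent_def by blast
qed

lemma poly_nilpotentI:
  fixes p :: "'a::comm_ring_1 poly"
  assumes "\<And>i. nilpotent (coeff p i)"
  shows "nilpotent p"
  using assms
proof (induction p rule: pCons_induct)
  case 0 show ?case unfolding nilpotent_def by (intro exI[of _ 1]) simp
next
  case (pCons a q)
  have "nilpotent q" using pCons.prems[of "Suc _"] by (intro pCons.IH) simp
  then have "nilpotent (q * [:0, 1:])" by (rule nilpotent_mult)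
  moreover obtain k where "a ^ k = 0" using pCons.prems[of 0] unfolding nilpotent_def by auto
  then have "[:a:] ^ k = 0" by (simp add: poly_const_pow)
  then have "nilpotent [:a:]" unfolding nilpotent_def by blast
  ultimately have "nilpotent ([:a:] + q * [:0, 1:])" using nilpotent_add by blast
  moreover have "pCons a q = [:a:] + q * [:0, 1:]" by (simp add: mult.commute)
  ultimately show ?case by (simp only:)
qed

lemma unit_add_nilpotent:
  fixes u z :: "'a::comm_ring_1"
  assumes u: "u dvd 1" and z: "nilpotent z"
  shows "(u + z) dvd 1"
proof -
  obtain v where uv: "1 = u * v" using u by (rule dvdE)
  define w where "w = - (v * z)"
  obtain N where "w ^ N = 0"
    using nilpotent_mult[OF z, of "- v"] unfolding nilpotent_def w_def by (auto simp: mult.commute)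
  then have "1 = (1 - w) * (\<Sum>i<N. w ^ i)" using one_diff_power_eq[of w N] by simp
  then have "(1 - w) dvd 1" by (rule dvdI)
  moreover have "u + z = u * (1 - w)"
  proof -
    have "u * (1 - w) = u + (u * v) * z" unfolding w_def by (simp add: algebra_simps)
    then show ?thesis by (simp flip: uv)
  qed
  ultimately show ?thesis using mult_dvd_mono[OF u, of "1 - w" 1] by simp
qed

lemma artinian_power_multiple:
  fixes a :: "'a::comm_ring_1"
  assumes "artinian TYPE('a)"
  obtains N r where "a ^ N = a ^ Suc N * r"
proof -
  define I where "I n = {a ^ n * r | r. True}" for n
  have "\<forall>n. is_ideal (I n)" unfolding I_def by (intro allI is_ideal_multiples)
  moreover have "\<forall>n. I (Suc n) \<subseteq> I n"
  proof (intro allI subsetI)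
    fix n x assume "x \<in> I (Suc n)"
    then obtain r where "x = a ^ Suc n * r" unfolding I_def by blast
    then have "x = a ^ n * (a * r)" by (simp add: mult_ac)
    then show "x \<in> I n" unfolding I_def by blast
  qed
  moreover have "(\<forall>n. is_ideal (I n)) \<and> (\<forall>n. I (Suc n) \<subseteq> I n) \<longrightarrow> (\<exists>N. \<forall>n\<ge>N. I n = I N)"
    using assms unfolding artinian_def by (rule spec)
  ultimately obtain N where N: "\<forall>n\<ge>N. I n = I N" by blast
  have "I N = I (Suc N)" using N[rule_format, of "Suc N"] by simp
  moreover have "a ^ N \<in> I N" unfolding I_def by (metis (mono_tags) mem_Collect_eq mult_1_right)
  ultimately obtain r where "a ^ N = a ^ Suc N * r" unfolding I_def by blast
  then show thesis by (rule that)
qed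

lemma artinian_local_ring_nilpotent:
  fixes M :: "'a::comm_ring_1 set"
  assumes art: "artinian TYPE('a)" and loc: "local_ring_with M" and "a \<in> M"
  shows "nilpotent a"
proof -
  obtain N r where r: "a ^ N = a ^ Suc N * r" using artinian_power_multiple[OF art] .
  have "1 - a * r \<notin> M"
  proof
    assume "1 - a * r \<in> M"
    moreover have "a * r \<in> M"
      using \<open>a \<in> M\<close> local_ring_is_ideal[OF loc] ideal_mult_right by blast
    ultimately have "(1 - a * r) + a * r \<in> M"
      using local_ring_is_ideal[OF loc] unfolding is_ideal_def by blast
    then show False using local_ring_one_notin[OF loc] by simp
  qed
  then have "(1 - a * r) dvd 1" using local_ring_notin_iff_unit[OF loc] by blast
  then obtain c where c: "1 = (1 - a * r) * c" by (rule dvdE)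
  have "a ^ N = a ^ N * ((1 - a * r) * c)" by (simp flip: c)
  also have "\<dots> = (a ^ N - a ^ Suc N * r) * c" by (simp add: algebra_simps)
  also have "\<dots> = 0" by (simp only: r[symmetric] diff_self mult_zero_left)
  finally show ?thesis unfolding nilpotent_def by blast
qed

lemma const_poly_unitI:
  fixes c :: "'a::comm_semiring_1"
  assumes "c dvd 1"
  shows "[:c:] dvd 1"
proof -
  obtain d where "1 = c * d" using assms by (rule dvdE)
  then have "1 = [:c:] * [:d:]" by (simp add: one_pCons mult.commute)
  then show ?thesis by (rule dvdI)
qed

lemma artinian_local_poly_unitI:
  fixes M :: "'a::comm_ring_1 set" and g :: "'a poly"
  assumes art: "artinian TYPE('a)" and loc: "local_ring_with M"
    and "coeff g 0 \<notin> M" and "\<And>i. i > 0 \<Longrightarrow> coeff g i \<in> M"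
  shows "g dvd 1"
proof -
  have "nilpotent (coeff (g - [:coeff g 0:]) i)" for i
  proof (cases i)
    case 0 then show ?thesis unfolding nilpotent_def by (intro exI[of _ 1]) simp
  next
    case (Suc j)
    then have "coeff (g - [:coeff g 0:]) i = coeff g i" by simp
    then show ?thesis using artinian_local_ring_nilpotent[OF art loc] assms(4) Suc by simp
  qed
  then have "nilpotent (g - [:coeff g 0:])" by (rule poly_nilpotentI)
  moreover have "[:coeff g 0:] dvd 1"
    using assms(3) local_ring_notin_iff_unit[OF loc] by (blast intro: const_poly_unitI)
  ultimately show ?thesis using unit_add_nilpotent by fastforce
qed

lemma coeff_mult_in_ideal:
  "is_ideal M \<Longrightarrow> (\<And>i. coeff g i \<in> M) \<Longrightarrow> coeff (g * h) k \<in> M"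
  unfolding coeff_mult by (intro ideal_sum) (auto intro: ideal_mult_right)

lemma regular_poly_multD:
  assumes "is_ideal M" "regular_poly M (g * h)"
  shows "regular_poly M g" "regular_poly M h"
  using assms coeff_mult_in_ideal[of M g h] coeff_mult_in_ideal[of M h g]
  unfolding regular_poly_def by (auto simp: mult.commute)

text \<open>The degree of the image of \<open>p\<close> in \<open>(R/M)[x]\<close>; junk if \<open>p\<close> is not regular.\<close>
definition residual_degree :: "'a::comm_ring_1 set \<Rightarrow> 'a poly \<Rightarrow> nat" where
  "residual_degree M p = (GREATEST i. coeff p i \<notin> M)"

lemma notin_ideal_le_degree:
  "is_ideal M \<Longrightarrow> coeff p k \<notin> M \<Longrightarrow> k \<le> degree p"
  by (metis is_ideal_def le_degree)

lemma le_residual_degree: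
  assumes "is_ideal M" "coeff p k \<notin> M"
  shows "k \<le> residual_degree M p"
  unfolding residual_degree_def
  using assms notin_ideal_le_degree by (blast intro: Greatest_le_nat)

lemma coeff_residual_degree_notin:
  assumes "is_ideal M" "regular_poly M p"
  shows "coeff p (residual_degree M p) \<notin> M"
proof -
  obtain k where "coeff p k \<notin> M" using assms(2) unfolding regular_poly_def by blast
  then show ?thesis
    unfolding residual_degree_def using notin_ideal_le_degree[OF assms(1)] by (rule GreatestI_nat)
qed

lemma residual_degree_le_degree:
  "is_ideal M \<Longrightarrow> regular_poly M p \<Longrightarrow> residual_degree M p \<le> degree p"
  by (rule notin_ideal_le_degree[OF _ coeff_residual_degree_notin])

lemma coeff_mult_residual_congruence:
  fixes M :: "'a::comm_ring_1 set"
  assumes M: "is_ideal M"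
    and p: "\<And>a. a > i \<Longrightarrow> coeff p a \<in> M" and q: "\<And>b. b > j \<Longrightarrow> coeff q b \<in> M"
  shows "coeff (p * q) (i + j) - coeff p i * coeff q j \<in> M"
proof -
  have "coeff (p * q) (i + j) =
      coeff p i * coeff q j + (\<Sum>a\<in>{..i+j} - {i}. coeff p a * coeff q (i + j - a))"
    unfolding coeff_mult by (subst sum.remove[of _ i]) auto
  moreover have "(\<Sum>a\<in>{..i+j} - {i}. coeff p a * coeff q (i + j - a)) \<in> M"
  proof (rule ideal_sum[OF M])
    fix a assume a: "a \<in> {..i+j} - {i}"
    show "coeff p a * coeff q (i + j - a) \<in> M"
    proof (cases "a > i")
      case True then show ?thesis using p M ideal_mult_right by blast
    next
      case False
      then have "coeff q (i + j - a) \<in> M" using a q by simp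
      then show ?thesis using M ideal_mult_right by (metis mult.commute)
    qed
  qed
  ultimately show ?thesis by simp
qed

lemma residual_degree_mult_ge:
  fixes M :: "'a::comm_ring_1 set"
  assumes loc: "local_ring_with M" and "regular_poly M p" "regular_poly M q"
  shows "residual_degree M p + residual_degree M q \<le> residual_degree M (p * q)"
proof -
  let ?i = "residual_degree M p" and ?j = "residual_degree M q"
  note M = local_ring_is_ideal[OF loc]
  have "coeff p ?i * coeff q ?j \<notin> M"
    using assms coeff_residual_degree_notin[OF M] local_ring_mult_notin by blast
  moreover have "coeff (p * q) (?i + ?j) - coeff p ?i * coeff q ?j \<in> M"
    using le_residual_degree[OF M] by (intro coeff_mult_residual_congruence[OF M]) (meson not_le)+
  ultimately have "coeff (p * q) (?i + ?j) \<notin> M"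
    using M ideal_diff by fastforce
  then show ?thesis using le_residual_degree[OF M] by blast
qed

lemma irreducible_residual_degree_pos:
  fixes M :: "'a::comm_ring_1 set"
  assumes art: "artinian TYPE('a)" and loc: "local_ring_with M"
    and "regular_poly M g" and "irreducible g"
  shows "residual_degree M g > 0"
proof (rule ccontr)
  note M = local_ring_is_ideal[OF loc]
  assume "\<not> residual_degree M g > 0"
  then have rd: "residual_degree M g = 0" by simp
  have "coeff g 0 \<notin> M" using coeff_residual_degree_notin[OF M assms(3)] rd by simp
  moreover have "coeff g i \<in> M" if "i > 0" for i
    using le_residual_degree[OF M, of g i] rd that by linarith
  ultimately have "g dvd 1" by (rule artinian_local_poly_unitI[OF art loc])
  then show False using \<open>irreducible g\<close> by (simp add: irreducible_def)
qed

lemma length_le_residual_degree: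
  fixes M :: "'a::comm_ring_1 set" and fs :: "'a poly list"
  assumes art: "artinian TYPE('a)" and loc: "local_ring_with M"
    and "\<forall>g\<in>set fs. irreducible g" and "regular_poly M (prod_list fs)"
  shows "length fs \<le> residual_degree M (prod_list fs)"
  using assms(3,4)
proof (induction fs)
  case Nil then show ?case by simp
next
  case (Cons g gs)
  note M = local_ring_is_ideal[OF loc]
  have fs: "prod_list (g # gs) = g * prod_list gs" by simp
  have g: "regular_poly M g" and gs: "regular_poly M (prod_list gs)"
    using regular_poly_multD[OF M Cons.prems(2)[unfolded fs]] by blast+
  have "length gs \<le> residual_degree M (prod_list gs)"
    using Cons.IH Cons.prems(1) gs by simp
  moreover have "residual_degree M g > 0"
    using irreducible_residual_degree_pos[OF art loc g] Cons.prems(1) by simp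
  ultimately have "length (g # gs) \<le> residual_degree M g + residual_degree M (prod_list gs)"
    by simp
  also have "\<dots> \<le> residual_degree M (prod_list (g # gs))"
    unfolding fs by (rule residual_degree_mult_ge[OF loc g gs])
  finally show ?case .
qed

theorem lemma4p3:
  fixes M :: "'a::comm_ring_1 set" and f :: "'a poly" and n :: nat
  assumes "artinian TYPE('a)"
    and "local_ring_with M"
    and "M \<noteq> {0}"
    and "regular_poly M f"
    and "degree f = n"
  shows "lengths f \<subseteq> {1..n}"
proof
  fix k assume "k \<in> lengths f"
  then obtain fs where k: "k > 0" "length fs = k" and
    fs: "\<forall>g\<in>set fs. irreducible g" "prod_list fs = f"
    unfolding lengths_def by blast
  have "k \<le> residual_degree M f"
    using length_le_residual_degree[OF assms(1,2) fs(1)] fs(2) k(2) assms(4) by simp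
  also have "\<dots> \<le> n"
    using residual_degree_le_degree[OF local_ring_is_ideal[OF assms(2)] assms(4)] assms(5) by simp
  finally show "k \<in> {1..n}" using k(1) by simp
qed

end
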